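(* Let $n\ge 3$ and $m\ge 2n$. Then the set \[D=\{(i,2i-1),(i,2i): i\in[n-1]\}\cup\{(n,j): 2n-1\le j\le m-1\}\] is an identifying code of $K_n\times K_m$.
   Context: $K_n\times K_m$ is the direct product of complete graphs: vertex set $[n]\times[m]$, with $(i,r)$ adjacent to $(j,s)$ iff $i\ne j$ and $r \ne s$. An identifying code is a dominating set $C$ with $N[x]\cap C\ne N[y]\cap C$ for all distinct vertices $x,y$ ($N[x]$ the closed neighborhood). *)

theory Defs
  imports Main
begin

text \<open>Direct product of complete graphs K_n x K_m on vertex set [n] x [m].\<close>

definition KV :: "nat \<Rightarrow> nat \<Rightarrow> (nat \<times> nat) set" where
  "KV n m = {1..n} \<times> {1..m}"

definition Kadj :: "nat \<times> nat \<Rightarrow> nat \<times> nat \<Rightarrow> bool" where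
  "Kadj x y \<longleftrightarrow> fst x \<noteq> fst y \<and> snd x \<noteq> snd y"

definition closed_nbhd :: "nat \<Rightarrow> nat \<Rightarrow> nat \<times> nat \<Rightarrow> (nat \<times> nat) set" where
  "closed_nbhd n m x = {y \<in> KV n m. y = x \<or> Kadj x y}"

definition identifying_code :: "nat \<Rightarrow> nat \<Rightarrow> (nat \<times> nat) set \<Rightarrow> bool" where
  "identifying_code n m C \<longleftrightarrow>
     C \<subseteq> KV n m \<and>
     (\<forall>x \<in> KV n m. closed_nbhd n m x \<inter> C \<noteq> {}) \<and>
     (\<forall>x \<in> KV n m. \<forall>y \<in> KV n m. x \<noteq> y \<longrightarrow>
        closed_nbhd n m x \<inter> C \<noteq> closed_nbhd n m y \<inter> C)"

end

theory Submission
  imports Defs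
begin

(* The code D meets every column c = 1..m-1 in exactly one vertex, so it is the graph
   {(r c, c) | c in S} of a "row function" r on the set S = {1..m-1} of columns.
   For such column codes a vertex (r c, c) lies in N[(a,b)] iff (c = b) <-> (r c = a).
   This gives a general criterion (column_code_identifying): a column code is
   identifying in K_n x K_m provided
     - at most one column carries no code vertex (separates vertices in one row),
     - each row is avoided by r on at least two columns (domination),
     - any two distinct rows together carry at least three code vertices
       (separates vertices in different rows).
   The theorem follows by writing D as the column code of the row function
   c |-> ceil(c/2) for c <= 2n-2 and c |-> n otherwise, and checking the three
   counting conditions. *)

definition column_code :: "(nat \<Rightarrow> nat) \<Rightarrow> nat set \<Rightarrow> (nat \<times> nat) set" where
  "column_code r S = {(r c, c) | c. c \<in> S}"

lemma column_code_in_nbhd: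
  assumes "(a, b) \<in> KV n m" "(r c, c) \<in> KV n m"
  shows "(r c, c) \<in> closed_nbhd n m (a, b) \<longleftrightarrow> ((c = b) \<longleftrightarrow> (r c = a))"
  using assms unfolding closed_nbhd_def Kadj_def by auto

lemma exists_outside:
  assumes "card B < card A" "finite B"
  obtains x where "x \<in> A" "x \<notin> B"
  using assms card_mono[of B A] by (meson not_le subsetI)

lemma card_pair_le: "card {x, y} \<le> 2"
  by (simp add: card_insert_if)

lemma column_code_identifying:
  assumes S_cols: "S \<subseteq> {1..m}"
    and r_rows: "\<And>c. c \<in> S \<Longrightarrow> r c \<in> {1..n}"
    and few_empty_cols: "card ({1..m} - S) \<le> 1"
    and avoid_row: "\<And>a. a \<in> {1..n} \<Longrightarrow> 2 \<le> card {c \<in> S. r c \<noteq> a}"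
    and two_rows: "\<And>a a'. a \<in> {1..n} \<Longrightarrow> a' \<in> {1..n} \<Longrightarrow> a \<noteq> a' \<Longrightarrow>
                     3 \<le> card {c \<in> S. r c = a \<or> r c = a'}"
  shows "identifying_code n m (column_code r S)"
proof -
  let ?C = "column_code r S"
  have in_KV: "(r c, c) \<in> KV n m" if "c \<in> S" for c
    using that S_cols r_rows unfolding KV_def by auto
  have witness: "(r c, c) \<in> closed_nbhd n m (a, b) \<inter> ?C \<longleftrightarrow> ((c = b) \<longleftrightarrow> (r c = a))"
    if "(a, b) \<in> KV n m" "c \<in> S" for a b c
    using column_code_in_nbhd[of a b n m r c, OF that(1) in_KV[OF that(2)]] that(2)
    unfolding column_code_def by auto
  have sub: "?C \<subseteq> KV n m"
    using in_KV unfolding column_code_def by auto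
  have dom: "closed_nbhd n m x \<inter> ?C \<noteq> {}" if x: "x \<in> KV n m" for x
  proof -
    obtain a b where ab: "x = (a, b)" by (cases x)
    have "a \<in> {1..n}" using x ab unfolding KV_def by auto
    then have "card {b} < card {c \<in> S. r c \<noteq> a}" using avoid_row[of a] by simp
    then obtain c where c: "c \<in> {c \<in> S. r c \<noteq> a}" "c \<notin> {b}"
      by (rule exists_outside) auto
    then show ?thesis using witness[of a b c] x ab by blast
  qed
  have sep: "closed_nbhd n m x \<inter> ?C \<noteq> closed_nbhd n m y \<inter> ?C"
    if x: "x \<in> KV n m" and y: "y \<in> KV n m" and "x \<noteq> y" for x y
  proof -
    obtain a b a' b' where ab: "x = (a, b)" "y = (a', b')" by (cases x, cases y)
    have rows: "a \<in> {1..n}" "a' \<in> {1..n}" and cols: "b \<in> {1..m}" "b' \<in> {1..m}"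
      using x y ab unfolding KV_def by auto
    have "\<exists>c \<in> S. ((c = b) \<longleftrightarrow> (r c = a)) \<noteq> ((c = b') \<longleftrightarrow> (r c = a'))"
    proof (cases "a = a'")
      case True
      (* same row: one of the two columns b, b' carries a code vertex *)
      then have "b \<noteq> b'" using \<open>x \<noteq> y\<close> ab by auto
      then have "card ({1..m} - S) < card {b, b'}" using few_empty_cols by simp
      then obtain c where "c \<in> {b, b'}" "c \<notin> {1..m} - S"
        by (rule exists_outside) auto
      then show ?thesis using cols \<open>b \<noteq> b'\<close> True by auto
    next
      case False
      (* different rows: a code vertex in row a or a' outside columns b, b' *)
      have "card {b, b'} < card {c \<in> S. r c = a \<or> r c = a'}"
        using two_rows[OF rows False] card_pair_le[of b b'] by linarith
      then obtain c where c: "c \<in> {c \<in> S. r c = a \<or> r c = a'}" "c \<notin> {b, b'}"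
        by (rule exists_outside) auto
      then show ?thesis using False by auto
    qed
    then obtain c where "c \<in> S" "((c = b) \<longleftrightarrow> (r c = a)) \<noteq> ((c = b') \<longleftrightarrow> (r c = a'))"
      by blast
    then show ?thesis using witness[of a b c] witness[of a' b' c] x y ab by blast
  qed
  show ?thesis unfolding identifying_code_def using sub dom sep by blast
qed

(* Row function of the code D: columns 2i-1 and 2i lie in row i (i < n), all later
   columns in row n. *)
definition code_row :: "nat \<Rightarrow> nat \<Rightarrow> nat" where
  "code_row n c = (if c \<le> 2*n - 2 then (c + 1) div 2 else n)"

lemma code_row_odd: "1 \<le> i \<Longrightarrow> i \<le> n \<Longrightarrow> code_row n (2*i - 1) = i"
  unfolding code_row_def by auto

lemma code_row_even: "1 \<le> i \<Longrightarrow> i < n \<Longrightarrow> code_row n (2*i) = i"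
  unfolding code_row_def by auto

lemma code_as_column_code:
  assumes "n \<ge> 1" "m \<ge> 2 * n"
  shows "{(i, 2*i - 1) | i. i \<in> {1..n-1}} \<union> {(i, 2*i) | i. i \<in> {1..n-1}}
           \<union> {(n, j) | j. 2*n - 1 \<le> j \<and> j \<le> m - 1}
         = column_code (code_row n) {1..m-1}" (is "?D = _")
proof (intro set_eqI iffI)
  fix x assume "x \<in> ?D"
  then have "\<exists>c \<in> {1..m-1}. x = (code_row n c, c)"
  proof (elim UnE CollectE exE conjE)
    fix i assume "x = (i, 2*i - 1)" "i \<in> {1..n-1}"
    then show ?thesis using assms code_row_odd[of i n] by (intro bexI[of _ "2*i - 1"]) auto
  next
    fix i assume "x = (i, 2*i)" "i \<in> {1..n-1}"
    then show ?thesis using assms code_row_even[of i n] by (intro bexI[of _ "2*i"]) auto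
  next
    fix j assume "x = (n, j)" "2*n - 1 \<le> j" "j \<le> m - 1"
    then show ?thesis using assms unfolding code_row_def by (intro bexI[of _ j]) auto
  qed
  then show "x \<in> column_code (code_row n) {1..m-1}"
    unfolding column_code_def by auto
next
  fix x assume "x \<in> column_code (code_row n) {1..m-1}"
  then obtain c where x: "x = (code_row n c, c)" and c: "1 \<le> c" "c \<le> m - 1"
    unfolding column_code_def by auto
  consider "c \<le> 2*n - 2" "even c" | "c \<le> 2*n - 2" "odd c" | "\<not> c \<le> 2*n - 2" by blast
  then show "x \<in> ?D"
  proof cases
    case 1
    then have "c = 2 * (c div 2)" "c div 2 \<in> {1..n-1}" "code_row n c = c div 2"
      using c unfolding code_row_def by auto
    then show ?thesis using x by blast
  next
    case 2
    then have "c = 2 * ((c + 1) div 2) - 1" "(c + 1) div 2 \<in> {1..n-1}"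
      "code_row n c = (c + 1) div 2"
      using c unfolding code_row_def by auto presburger+
    then show ?thesis using x by blast
  next
    case 3
    then show ?thesis using x c unfolding code_row_def by auto
  qed
qed

(* Each row is avoided on two columns: rows 1 and 2 occupy columns 1,2 and 3,4. *)
lemma code_row_avoids:
  assumes "n \<ge> 3" "m \<ge> 2 * n"
  shows "2 \<le> card {c \<in> {1..m-1}. code_row n c \<noteq> a}"
proof -
  have rows12: "code_row n 1 = 1" "code_row n 2 = 1" "code_row n 3 = 2" "code_row n 4 = 2"
    using assms unfolding code_row_def by auto
  obtain c1 c2 :: nat where "c1 \<noteq> c2" "{c1, c2} \<subseteq> {c \<in> {1..m-1}. code_row n c \<noteq> a}"
  proof (cases "a = 1")
    case True
    then show ?thesis using assms rows12 by (intro that[of 3 4]) auto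
  next
    case False
    then show ?thesis using assms rows12 by (intro that[of 1 2]) auto
  qed
  then have "card {c1, c2} \<le> card {c \<in> {1..m-1}. code_row n c \<noteq> a}"
    by (intro card_mono) auto
  then show ?thesis using \<open>c1 \<noteq> c2\<close> by simp
qed

(* Two distinct rows a, a' carry the code vertices in columns 2a-1, 2a'-1 and
   2 min(a,a'), the smaller row being below n. *)
lemma code_row_two_rows:
  assumes "m \<ge> 2 * n" "a \<in> {1..n}" "a' \<in> {1..n}" "a \<noteq> a'"
  shows "3 \<le> card {c \<in> {1..m-1}. code_row n c = a \<or> code_row n c = a'}"
proof -
  let ?k = "min a a'"
  have "?k < n" "1 \<le> ?k" using assms by auto
  then have "code_row n (2 * ?k) = ?k" by (rule code_row_even[rotated])
  then have "{2*a - 1, 2*a' - 1, 2 * ?k}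
                  \<subseteq> {c \<in> {1..m-1}. code_row n c = a \<or> code_row n c = a'}"
    using assms code_row_odd[of a n] code_row_odd[of a' n] by (auto simp: min_def)
  moreover have "card {2*a - 1, 2*a' - 1, 2 * ?k} = 3"
    using assms by (auto simp: min_def card_insert_if)
  ultimately show ?thesis using card_mono[of _ "{2*a - 1, 2*a' - 1, 2 * ?k}"] by simp
qed

theorem mainTheorem14:
  fixes n m :: nat
  assumes "n \<ge> 3" and "m \<ge> 2 * n"
  shows "identifying_code n m
           ({(i, 2*i - 1) | i. i \<in> {1..n-1}} \<union> {(i, 2*i) | i. i \<in> {1..n-1}}
            \<union> {(n, j) | j. 2*n - 1 \<le> j \<and> j \<le> m - 1})"
proof -
  have "code_row n c \<in> {1..n}" if "c \<in> {1..m-1}" for c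
    using that assms unfolding code_row_def by auto
  moreover have "{1..m} - {1..m-1} = {m}" using assms by auto
  ultimately have "identifying_code n m (column_code (code_row n) {1..m-1})"
    using code_row_avoids[OF assms] code_row_two_rows[OF assms(2)]
    by (intro column_code_identifying) auto
  then show ?thesis using code_as_column_code[of n m] assms by simp
qed

end
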